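(* Let $h>0$ and $f\in H^\omega(X)\cap L_1(X)$. Then \[ \|f\|_{\mathcal B(X)}\le\frac{\|f\|_{H^\omega(X)}}{\mu(B_h)}\int_{B_h}\omega(\rho(u,\theta))\,d\mu(u)+\frac{\|f\|_{L_1(X)}}{\mu(B_h)}. \] The inequality is sharp: it becomes an equality for $f_{e,h}(x)=(\omega(h)-\omega(\rho(x,\theta)))_+$.
   Context: Standing setting: $(X,\rho)$ is a metric space with a Borel measure $\mu$. $X$ is a commutative monoid, i.e. there is an associative and commutative binary operation $+$ on $X$ with a neutral element $\theta$. The measure is translation invariant: $\mu(x+Q)=\mu(Q)$ for every $\mu$-measurable $Q\subset X$ and every $x\in X$; correspondingly $\int_{B_h}g(x+u)\,d\mu(u)=\int_{x+B_h}g(u)\,d\mu(u)$ for locally integrable $g$. Moreover $\rho(x+y,x)\le\rho(y,\theta)$ for all $x,y\in X$. $B_h$ denotes the open ball of radius $h$ centered at $\theta$, and it is assumed that $0<\mu(B_h)<\infty$ and $B_h\neq\{\theta\}$ for every $h>0$. Every continuous real function on $X$ is integrable on every open ball. For a function $f$, $\|f\|_{\mathcal B(X)}=\sup_{x\in X}|f(x)|$; $L_1(X)$ is the space of $\mu$-integrable functions with the usual norm. $\alpha_+=\max\{\alpha,0\}$. A modulus of continuity is a function $\omega\colon[0,\infty)\to[0,\infty)$ that is non-decreasing, semi-additive ($\omega(s+t)\le\omega(s)+\omega(t)$), with $\omega(0)=0$, and not identically zero. $H^\omega(X)$ is the space of $f\colon X\to\mathbb R$ with $\|f\|_{H^\omega(X)}:=\sup_{x\neq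 y}\frac{|f(x)-f(y)|}{\omega(\rho(x,y))}<\infty$. *)

theory Defs
  imports "HOL-Analysis.Analysis"
begin

text \<open>Standing setting: X is a type that is both a metric space (rho = dist) and a
  commutative monoid (+, neutral element theta = 0); M is a Borel measure on X.\<close>

definition standing_setting :: "'a::{metric_space,comm_monoid_add} measure \<Rightarrow> bool" where
  "standing_setting M \<longleftrightarrow>
     sets M = sets borel \<and>
     (\<forall>Q\<in>sets M. \<forall>x. (\<lambda>u. x + u) ` Q \<in> sets M \<and>
                       emeasure M ((\<lambda>u. x + u) ` Q) = emeasure M Q) \<and>
     (\<forall>(g::'a \<Rightarrow> real) x h. h > 0 \<longrightarrow> (\<forall>y r. set_integrable M (ball y r) g) \<longrightarrow>
         set_integrable M (ball 0 h) (\<lambda>u. g (x + u)) \<and>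
         (LINT u:ball 0 h|M. g (x + u)) = (LINT u:((\<lambda>v. x + v) ` ball 0 h)|M. g u)) \<and>
     (\<forall>x y::'a. dist (x + y) x \<le> dist y 0) \<and>
     (\<forall>h::real. h > 0 \<longrightarrow> 0 < emeasure M (ball 0 h) \<and> emeasure M (ball 0 h) < \<infinity> \<and> ball (0::'a) h \<noteq> {0}) \<and>
     (\<forall>g::'a \<Rightarrow> real. continuous_on UNIV g \<longrightarrow> (\<forall>(y::'a) (r::real). set_integrable M (ball y r) g))"

definition modulus_of_continuity :: "(real \<Rightarrow> real) \<Rightarrow> bool" where
  "modulus_of_continuity \<omega> \<longleftrightarrow>
     (\<forall>t\<ge>0. \<omega> t \<ge> 0) \<and> mono_on {0..} \<omega> \<and>
     (\<forall>s\<ge>0. \<forall>t\<ge>0. \<omega> (s + t) \<le> \<omega> s + \<omega> t) \<and>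
     \<omega> 0 = 0 \<and> (\<exists>t\<ge>0. \<omega> t \<noteq> 0)"

definition H_omega_quot :: "(real \<Rightarrow> real) \<Rightarrow> ('a::metric_space \<Rightarrow> real) \<Rightarrow> 'a \<times> 'a \<Rightarrow> real" where
  "H_omega_quot \<omega> f = (\<lambda>(x, y). \<bar>f x - f y\<bar> / \<omega> (dist x y))"

definition in_H_omega :: "(real \<Rightarrow> real) \<Rightarrow> ('a::metric_space \<Rightarrow> real) \<Rightarrow> bool" where
  "in_H_omega \<omega> f \<longleftrightarrow> bdd_above (H_omega_quot \<omega> f ` {(x, y). x \<noteq> y})"

definition H_omega_norm :: "(real \<Rightarrow> real) \<Rightarrow> ('a::metric_space \<Rightarrow> real) \<Rightarrow> real" where
  "H_omega_norm \<omega> f = (SUP p \<in> {(x, y). x \<noteq> y}. H_omega_quot \<omega> f p)"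

definition sup_norm :: "('a \<Rightarrow> real) \<Rightarrow> real" where
  "sup_norm f = (SUP x. \<bar>f x\<bar>)"

definition L1_norm :: "'a measure \<Rightarrow> ('a \<Rightarrow> real) \<Rightarrow> real" where
  "L1_norm M f = (\<integral>x. \<bar>f x\<bar> \<partial>M)"

end

theory Submission
  imports Defs
begin

text \<open>
  Since \<open>dist (x + u) x \<le> dist u 0\<close>, the \<open>H\<^sup>\<omega>\<close> condition gives
  \<open>\<bar>f x\<bar> \<le> \<bar>f (x + u)\<bar> + \<parallel>f\<parallel>\<^sub>\<omega> \<omega> (dist u 0)\<close> for every \<open>u\<close>. Averaging over
  \<open>u \<in> B\<^sub>h\<close> and using translation invariance, the mean of \<open>\<bar>f (x + u)\<bar>\<close> is the mean of \<open>\<bar>f\<bar>\<close>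
  over \<open>x + B\<^sub>h\<close>, which is at most \<open>\<parallel>f\<parallel>\<^sub>1 / \<mu> B\<^sub>h\<close>. For the extremal function every
  term is explicit: its sup norm is \<open>\<omega> h\<close>, its \<open>H\<^sup>\<omega>\<close> norm is \<open>1\<close> (attained at \<open>(p, 0)\<close>
  for any \<open>p \<in> B\<^sub>h - {0}\<close>), and its integral is \<open>\<omega> h \<mu> B\<^sub>h - \<integral>\<^bsub>B\<^sub>h\<^esub> \<omega> (dist u 0)\<close>.
\<close>

lemma modulus_of_continuity_nonneg:
  "modulus_of_continuity \<omega> \<Longrightarrow> 0 \<le> t \<Longrightarrow> 0 \<le> \<omega> t"
  unfolding modulus_of_continuity_def by auto

lemma modulus_of_continuity_zero: "modulus_of_continuity \<omega> \<Longrightarrow> \<omega> 0 = 0"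
  unfolding modulus_of_continuity_def by auto

lemma modulus_of_continuity_mono:
  "modulus_of_continuity \<omega> \<Longrightarrow> 0 \<le> s \<Longrightarrow> s \<le> t \<Longrightarrow> \<omega> s \<le> \<omega> t"
  unfolding modulus_of_continuity_def by (auto intro: mono_onD)

lemma modulus_of_continuity_subadditive:
  "modulus_of_continuity \<omega> \<Longrightarrow> 0 \<le> s \<Longrightarrow> 0 \<le> t \<Longrightarrow> \<omega> (s + t) \<le> \<omega> s + \<omega> t"
  unfolding modulus_of_continuity_def by auto

lemma modulus_of_continuity_pos:
  assumes \<omega>: "modulus_of_continuity \<omega>" and "0 < t"
  shows "0 < \<omega> t"
proof (rule ccontr)
  assume "\<not> 0 < \<omega> t"
  with modulus_of_continuity_nonneg[OF \<omega>, of t] \<open>0 < t\<close> have "\<omega> t = 0" by linarith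
  have multiples: "\<omega> (real n * t) \<le> 0" for n
  proof (induction n)
    case 0
    show ?case using modulus_of_continuity_zero[OF \<omega>] by simp
  next
    case (Suc n)
    have "\<omega> (real (Suc n) * t) \<le> \<omega> (real n * t) + \<omega> t"
      using modulus_of_continuity_subadditive[OF \<omega>, of "real n * t" t] \<open>0 < t\<close>
      by (simp add: algebra_simps)
    with Suc \<open>\<omega> t = 0\<close> show ?case by simp
  qed
  obtain s where "0 \<le> s" "\<omega> s \<noteq> 0"
    using \<omega> unfolding modulus_of_continuity_def by auto
  obtain n where "s / t \<le> real n" using real_arch_simple by blast
  then have "s \<le> real n * t" using \<open>0 < t\<close> by (simp add: field_simps)
  then have "\<omega> s \<le> \<omega> (real n * t)"
    using modulus_of_continuity_mono[OF \<omega>] \<open>0 \<le> s\<close> by blast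
  with multiples[of n] modulus_of_continuity_nonneg[OF \<omega> \<open>0 \<le> s\<close>] \<open>\<omega> s \<noteq> 0\<close>
  show False by linarith
qed

lemma modulus_of_continuity_abs_diff_le:
  assumes \<omega>: "modulus_of_continuity \<omega>" and "0 \<le> s" "0 \<le> t"
  shows "\<bar>\<omega> s - \<omega> t\<bar> \<le> \<omega> \<bar>s - t\<bar>"
proof -
  have *: "\<bar>\<omega> a - \<omega> b\<bar> \<le> \<omega> (b - a)" if "0 \<le> a" "a \<le> b" for a b
    using modulus_of_continuity_mono[OF \<omega> that]
      modulus_of_continuity_subadditive[OF \<omega>, of a "b - a"] that by simp
  show ?thesis
    using *[of s t] *[of t s] assms by (cases "s \<le> t") (simp_all add: abs_minus_commute)
qed

lemma borel_measurable_modulus_dist: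
  assumes "modulus_of_continuity \<omega>"
  shows "(\<lambda>u::'a::metric_space. \<omega> (dist u c)) \<in> borel_measurable borel"
proof -
  have "mono (\<lambda>t. \<omega> (max t 0))"
    by (auto simp: mono_def intro!: modulus_of_continuity_mono[OF assms])
  then have "(\<lambda>t. \<omega> (max t 0)) \<in> borel_measurable borel" by (rule borel_measurable_mono)
  moreover have "(\<lambda>u::'a. dist u c) \<in> borel_measurable borel"
    by (intro borel_measurable_continuous_onI continuous_intros)
  ultimately have "(\<lambda>u::'a. \<omega> (max (dist u c) 0)) \<in> borel_measurable borel"
    by (rule measurable_compose[rotated])
  then show ?thesis by simp
qed

lemma H_omega_quot_le_norm:
  fixes f :: "'a::metric_space \<Rightarrow> real"
  shows "in_H_omega \<omega> f \<Longrightarrow> x \<noteq> y \<Longrightarrow> H_omega_quot \<omega> f (x, y) \<le> H_omega_norm \<omega> f"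
  unfolding in_H_omega_def H_omega_norm_def by (intro cSUP_upper) auto

lemma H_omega_norm_nonneg:
  fixes f :: "'a::metric_space \<Rightarrow> real" and x y :: 'a
  assumes "modulus_of_continuity \<omega>" "in_H_omega \<omega> f" "x \<noteq> y"
  shows "0 \<le> H_omega_norm \<omega> f"
proof -
  have "0 \<le> H_omega_quot \<omega> f (x, y)"
    unfolding H_omega_quot_def using modulus_of_continuity_nonneg[OF assms(1)] by simp
  with H_omega_quot_le_norm[OF assms(2,3)] show ?thesis by linarith
qed

lemma abs_diff_le_H_omega_norm:
  assumes \<omega>: "modulus_of_continuity \<omega>" and "in_H_omega \<omega> f"
  shows "\<bar>f x - f y\<bar> \<le> H_omega_norm \<omega> f * \<omega> (dist x y)"
proof (cases "x = y")
  case True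
  then show ?thesis using modulus_of_continuity_zero[OF \<omega>] by simp
next
  case False
  then have "0 < \<omega> (dist x y)" by (simp add: modulus_of_continuity_pos[OF \<omega>])
  with H_omega_quot_le_norm[OF \<open>in_H_omega \<omega> f\<close> False] show ?thesis
    by (simp add: H_omega_quot_def pos_divide_le_eq)
qed

lemma H_omega_quot_le_if_bound:
  fixes f :: "'a::metric_space \<Rightarrow> real"
  assumes \<omega>: "modulus_of_continuity \<omega>" and bound: "\<And>x y. \<bar>f x - f y\<bar> \<le> C * \<omega> (dist x y)"
    and "x \<noteq> y"
  shows "H_omega_quot \<omega> f (x, y) \<le> C"
  using bound[of x y] modulus_of_continuity_pos[OF \<omega>, of "dist x y"] \<open>x \<noteq> y\<close>
  by (simp add: H_omega_quot_def pos_divide_le_eq)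

lemma in_H_omega_if_bound:
  fixes f :: "'a::metric_space \<Rightarrow> real"
  assumes "modulus_of_continuity \<omega>" "\<And>x y. \<bar>f x - f y\<bar> \<le> C * \<omega> (dist x y)"
  shows "in_H_omega \<omega> f"
  unfolding in_H_omega_def using H_omega_quot_le_if_bound[OF assms]
  by (intro bdd_aboveI2[where M = C]) auto

lemma H_omega_norm_le_if_bound:
  fixes f :: "'a::metric_space \<Rightarrow> real"
  assumes "modulus_of_continuity \<omega>" "\<And>x y. \<bar>f x - f y\<bar> \<le> C * \<omega> (dist x y)"
    and "(a::'a) \<noteq> b"
  shows "H_omega_norm \<omega> f \<le> C"
  unfolding H_omega_norm_def using H_omega_quot_le_if_bound[OF assms(1,2)] \<open>a \<noteq> b\<close>
  by (intro cSUP_least) auto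

lemma sup_norm_le: "(\<And>x. \<bar>f x\<bar> \<le> C) \<Longrightarrow> sup_norm f \<le> C"
  unfolding sup_norm_def by (intro cSUP_least) auto

lemma sup_norm_eq: "(\<And>x. \<bar>f x\<bar> \<le> C) \<Longrightarrow> \<bar>f a\<bar> = C \<Longrightarrow> sup_norm f = C"
  unfolding sup_norm_def by (intro antisym cSUP_least cSUP_upper2[where x = a] bdd_aboveI2) auto

locale standing_space =
  fixes M :: "'a::{metric_space,comm_monoid_add} measure"
  assumes sets_eq_borel: "sets M = sets borel"
    and translate_in_sets: "Q \<in> sets M \<Longrightarrow> (\<lambda>u. x + u) ` Q \<in> sets M"
    and set_integrable_translate_ball:
      "0 < h \<Longrightarrow> (\<And>y r. set_integrable M (ball y r) (g :: 'a \<Rightarrow> real)) \<Longrightarrow>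
         set_integrable M (ball 0 h) (\<lambda>u. g (x + u))"
    and set_integral_translate_ball:
      "0 < h \<Longrightarrow> (\<And>y r. set_integrable M (ball y r) (g :: 'a \<Rightarrow> real)) \<Longrightarrow>
         (LINT u:ball 0 h|M. g (x + u)) = (LINT u:(\<lambda>v. x + v) ` ball 0 h|M. g u)"
    and dist_add_le: "dist (x + y) (x::'a) \<le> dist y 0"
    and emeasure_ball_pos: "0 < h \<Longrightarrow> 0 < emeasure M (ball 0 h)"
    and emeasure_ball_finite: "0 < h \<Longrightarrow> emeasure M (ball 0 h) < \<infinity>"
    and ball_ne_singleton: "0 < h \<Longrightarrow> ball (0::'a) h \<noteq> {0}"

lemma standing_space_if_standing_setting: "standing_setting M \<Longrightarrow> standing_space M"
  unfolding standing_setting_def by unfold_locales auto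

context standing_space
begin

lemma ball_in_sets: "ball 0 h \<in> sets M"
  by (simp add: sets_eq_borel)

lemma emeasure_ball_eq_measure:
  assumes "0 < h"
  shows "emeasure M (ball 0 h) = measure M (ball 0 h)"
  using emeasure_ball_finite[OF assms] by (intro emeasure_eq_ennreal_measure) (simp add: less_top)

lemma measure_ball_pos: "0 < h \<Longrightarrow> 0 < measure M (ball 0 h)"
  using emeasure_ball_pos emeasure_ball_eq_measure by fastforce

lemma ball_has_nonzero_point:
  assumes "0 < h"
  obtains p :: 'a where "p \<in> ball 0 h" "p \<noteq> 0"
  using ball_ne_singleton[OF assms] centre_in_ball[of "0::'a" h] assms by blast

lemma set_integrable_const_ball: "0 < h \<Longrightarrow> set_integrable M (ball 0 h) (\<lambda>_. c::real)"
  using emeasure_ball_finite ball_in_sets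
  unfolding set_integrable_def by (intro integrable_scaleR_left) auto

lemma set_integral_const_ball:
  assumes "0 < h"
  shows "(LINT u:ball 0 h|M. c) = measure M (ball 0 h) * c"
  using set_integral_const[OF ball_in_sets, of h c] emeasure_ball_finite[OF assms] by simp

lemma set_integrable_modulus_dist:
  assumes \<omega>: "modulus_of_continuity \<omega>" and "0 < h"
  shows "set_integrable M (ball 0 h) (\<lambda>u. \<omega> (dist u 0))"
proof (rule set_integrable_bound[OF set_integrable_const_ball[OF \<open>0 < h\<close>, of "\<omega> h"]])
  show "set_borel_measurable M (ball 0 h) (\<lambda>u. \<omega> (dist u 0))"
    using borel_measurable_modulus_dist[OF \<omega>] ball_in_sets
    unfolding set_borel_measurable_def
    by (intro borel_measurable_scaleR borel_measurable_indicator)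
       (auto simp: measurable_cong_sets[OF sets_eq_borel refl])
  have "norm (\<omega> (dist u 0)) \<le> norm (\<omega> h)" if "u \<in> ball 0 h" for u
    using that modulus_of_continuity_nonneg[OF \<omega>, of "dist u 0"]
      modulus_of_continuity_mono[OF \<omega>, of "dist u 0" h]
    by (simp add: dist_commute)
  then show "AE u in M. u \<in> ball 0 h \<longrightarrow> norm (\<omega> (dist u 0)) \<le> norm (\<omega> h)"
    by (intro AE_I2) blast
qed

lemma abs_le_H_omega_L1_bound:
  assumes \<omega>: "modulus_of_continuity \<omega>" and "0 < h" and f: "in_H_omega \<omega> f" "integrable M f"
  shows "\<bar>f x\<bar> \<le> (H_omega_norm \<omega> f * (LINT u:ball 0 h|M. \<omega> (dist u 0)) + L1_norm M f)
                  / measure M (ball 0 h)"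
proof -
  let ?B = "ball (0::'a) h" and ?H = "H_omega_norm \<omega> f"
  obtain p :: 'a where "p \<in> ?B" "p \<noteq> 0" using ball_has_nonzero_point[OF \<open>0 < h\<close>] .
  have "0 \<le> ?H" using H_omega_norm_nonneg[OF \<omega> f(1) \<open>p \<noteq> 0\<close>] .
  have shift: "\<bar>f x\<bar> \<le> \<bar>f (x + u)\<bar> + ?H * \<omega> (dist u 0)" for u
  proof -
    have "\<omega> (dist x (x + u)) \<le> \<omega> (dist u 0)"
      using dist_add_le[of x u] by (intro modulus_of_continuity_mono[OF \<omega>]) (auto simp: dist_commute)
    then have "?H * \<omega> (dist x (x + u)) \<le> ?H * \<omega> (dist u 0)"
      using \<open>0 \<le> ?H\<close> by (rule mult_left_mono)
    with abs_diff_le_H_omega_norm[OF \<omega> f(1), of x "x + u"] show ?thesis by linarith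
  qed
  have abs_f: "integrable M (\<lambda>x. \<bar>f x\<bar>)" using f(2) by (rule integrable_abs)
  have "set_integrable M (ball y r) (\<lambda>x. \<bar>f x\<bar>)" for y r
    unfolding set_integrable_def by (intro integrable_mult_indicator abs_f) (simp add: sets_eq_borel)
  note translate = set_integrable_translate_ball[OF \<open>0 < h\<close> this]
    set_integral_translate_ball[OF \<open>0 < h\<close> this]
  have translate_le: "(LINT u:(\<lambda>v. x + v) ` ?B|M. \<bar>f u\<bar>) \<le> L1_norm M f"
    unfolding set_lebesgue_integral_def L1_norm_def
    using integrable_mult_indicator[OF translate_in_sets[OF ball_in_sets] abs_f]
    by (intro integral_mono abs_f) (auto simp: indicator_def)
  have "measure M ?B * \<bar>f x\<bar> = (LINT u:?B|M. \<bar>f x\<bar>)"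
    by (simp add: set_integral_const_ball[OF \<open>0 < h\<close>])
  also have "\<dots> \<le> (LINT u:?B|M. \<bar>f (x + u)\<bar> + ?H * \<omega> (dist u 0))"
    using translate(1) set_integrable_modulus_dist[OF \<omega> \<open>0 < h\<close>] shift
    by (intro set_integral_mono set_integrable_const_ball[OF \<open>0 < h\<close>]) auto
  also have "\<dots> = (LINT u:?B|M. \<bar>f (x + u)\<bar>) + ?H * (LINT u:?B|M. \<omega> (dist u 0))"
    using translate(1) set_integrable_modulus_dist[OF \<omega> \<open>0 < h\<close>] by simp
  also have "\<dots> \<le> L1_norm M f + ?H * (LINT u:?B|M. \<omega> (dist u 0))"
    using translate(2) translate_le by simp
  finally show ?thesis
    using measure_ball_pos[OF \<open>0 < h\<close>] by (simp add: pos_le_divide_eq algebra_simps)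
qed

end

definition extremal_fun :: "(real \<Rightarrow> real) \<Rightarrow> real \<Rightarrow> 'a::{metric_space,zero} \<Rightarrow> real" where
  "extremal_fun \<omega> h x = max (\<omega> h - \<omega> (dist x 0)) 0"

lemma abs_diff_extremal_fun_le:
  assumes \<omega>: "modulus_of_continuity \<omega>"
  shows "\<bar>extremal_fun \<omega> h x - extremal_fun \<omega> h y\<bar> \<le> \<omega> (dist x y)"
proof -
  have "\<bar>extremal_fun \<omega> h x - extremal_fun \<omega> h y\<bar> \<le> \<bar>\<omega> (dist x 0) - \<omega> (dist y 0)\<bar>"
    unfolding extremal_fun_def by (simp add: max_def abs_if)
  also have "\<dots> \<le> \<omega> \<bar>dist x 0 - dist y 0\<bar>"
    by (rule modulus_of_continuity_abs_diff_le[OF \<omega>]) auto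
  also have "\<dots> \<le> \<omega> (dist x y)"
    using dist_triangle[of x 0 y] dist_triangle[of y 0 x]
    by (intro modulus_of_continuity_mono[OF \<omega>]) (auto simp: dist_commute abs_le_iff)
  finally show ?thesis .
qed

lemma in_H_omega_extremal_fun: "modulus_of_continuity \<omega> \<Longrightarrow> in_H_omega \<omega> (extremal_fun \<omega> h)"
  by (rule in_H_omega_if_bound[where C = 1]) (simp_all add: abs_diff_extremal_fun_le)

lemma extremal_fun_zero:
  "modulus_of_continuity \<omega> \<Longrightarrow> 0 \<le> h \<Longrightarrow> extremal_fun \<omega> h 0 = \<omega> h"
  by (simp add: extremal_fun_def modulus_of_continuity_zero modulus_of_continuity_nonneg)

lemma sup_norm_extremal_fun:
  assumes \<omega>: "modulus_of_continuity \<omega>" and "0 \<le> h"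
  shows "sup_norm (extremal_fun \<omega> h :: 'a::{metric_space,zero} \<Rightarrow> real) = \<omega> h"
proof (rule sup_norm_eq)
  show "\<bar>extremal_fun \<omega> h x\<bar> \<le> \<omega> h" for x :: 'a
    using modulus_of_continuity_nonneg[OF \<omega>] \<open>0 \<le> h\<close> by (simp add: extremal_fun_def)
  show "\<bar>extremal_fun \<omega> h (0::'a)\<bar> = \<omega> h"
    by (simp add: extremal_fun_zero[OF assms] modulus_of_continuity_nonneg[OF assms])
qed

lemma H_omega_norm_extremal_fun:
  fixes p :: "'a::{metric_space,zero}"
  assumes \<omega>: "modulus_of_continuity \<omega>" and "p \<in> ball 0 h" "p \<noteq> 0"
  shows "H_omega_norm \<omega> (extremal_fun \<omega> h :: 'a \<Rightarrow> real) = 1"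
proof -
  let ?fe = "extremal_fun \<omega> h :: 'a \<Rightarrow> real"
  have lip: "\<bar>?fe x - ?fe y\<bar> \<le> 1 * \<omega> (dist x y)" for x y
    by (simp add: abs_diff_extremal_fun_le[OF \<omega>])
  have "0 \<le> h"
    using \<open>p \<in> ball 0 h\<close> by (meson less_imp_le mem_ball order.strict_trans1 zero_le_dist)
  have "?fe p = \<omega> h - \<omega> (dist p 0)"
    using \<open>p \<in> ball 0 h\<close> modulus_of_continuity_mono[OF \<omega>, of "dist p 0" h]
    by (simp add: extremal_fun_def dist_commute)
  then have "H_omega_quot \<omega> ?fe (p, 0) = 1"
    using modulus_of_continuity_pos[OF \<omega>, of "dist p 0"] \<open>p \<noteq> 0\<close>
    by (simp add: H_omega_quot_def extremal_fun_zero[OF \<omega> \<open>0 \<le> h\<close>])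
  moreover have "H_omega_quot \<omega> ?fe (p, 0) \<le> H_omega_norm \<omega> ?fe"
    by (rule H_omega_quot_le_norm[OF in_H_omega_extremal_fun[OF \<omega>] \<open>p \<noteq> 0\<close>])
  moreover have "H_omega_norm \<omega> ?fe \<le> 1"
    by (rule H_omega_norm_le_if_bound[OF \<omega> lip \<open>p \<noteq> 0\<close>])
  ultimately show ?thesis by simp
qed

lemma extremal_fun_eq_indicator:
  assumes \<omega>: "modulus_of_continuity \<omega>" and "0 \<le> h"
  shows "extremal_fun \<omega> h = (\<lambda>x. indicator (ball 0 h) x *\<^sub>R (\<omega> h - \<omega> (dist x 0)))"
proof
  fix x :: 'a
  show "extremal_fun \<omega> h x = indicator (ball 0 h) x *\<^sub>R (\<omega> h - \<omega> (dist x 0))"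
    using modulus_of_continuity_mono[OF \<omega>, of "dist x 0" h] modulus_of_continuity_mono[OF \<omega>, of h "dist x 0"]
      \<open>0 \<le> h\<close> by (cases "x \<in> ball 0 h") (auto simp: extremal_fun_def dist_commute)
qed

context standing_space
begin

lemma set_integrable_extremal_fun_profile:
  assumes "modulus_of_continuity \<omega>" and "0 < h"
  shows "set_integrable M (ball 0 h) (\<lambda>x. \<omega> h - \<omega> (dist x 0))"
  using set_integrable_const_ball[OF \<open>0 < h\<close>] set_integrable_modulus_dist[OF assms]
  by (rule set_integral_diff)

lemma integrable_extremal_fun:
  assumes \<omega>: "modulus_of_continuity \<omega>" and "0 < h"
  shows "integrable M (extremal_fun \<omega> h)"
  using set_integrable_extremal_fun_profile[OF assms]
  unfolding extremal_fun_eq_indicator[OF \<omega> less_imp_le[OF \<open>0 < h\<close>]] set_integrable_def .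

lemma L1_norm_extremal_fun:
  assumes \<omega>: "modulus_of_continuity \<omega>" and "0 < h"
  shows "L1_norm M (extremal_fun \<omega> h) = \<omega> h * measure M (ball 0 h) - (LINT u:ball 0 h|M. \<omega> (dist u 0))"
proof -
  have "L1_norm M (extremal_fun \<omega> h) = integral\<^sup>L M (extremal_fun \<omega> h)"
    unfolding L1_norm_def by (rule Bochner_Integration.integral_cong) (auto simp: extremal_fun_def)
  also have "\<dots> = (LINT x:ball 0 h|M. \<omega> h - \<omega> (dist x 0))"
    unfolding extremal_fun_eq_indicator[OF \<omega> less_imp_le[OF \<open>0 < h\<close>]] set_lebesgue_integral_def ..
  also have "\<dots> = \<omega> h * measure M (ball 0 h) - (LINT u:ball 0 h|M. \<omega> (dist u 0))"
    using set_integrable_const_ball[OF \<open>0 < h\<close>] set_integrable_modulus_dist[OF assms]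
    by (simp add: set_integral_diff set_integral_const_ball[OF \<open>0 < h\<close>])
  finally show ?thesis .
qed

end

theorem corollary1:
  fixes M :: "'a::{metric_space,comm_monoid_add} measure"
    and \<omega> :: "real \<Rightarrow> real" and f :: "'a \<Rightarrow> real" and h :: real
  assumes "standing_setting M"
    and "modulus_of_continuity \<omega>"
    and "h > 0"
    and "in_H_omega \<omega> f"
    and "integrable M f"
  shows "(bdd_above (range (\<lambda>x. \<bar>f x\<bar>)) \<and>
         sup_norm f \<le> H_omega_norm \<omega> f / measure M (ball 0 h) * (LINT u:ball 0 h|M. \<omega> (dist u 0))
                      + L1_norm M f / measure M (ball 0 h)) \<and>
         (let fe = (\<lambda>x. max (\<omega> h - \<omega> (dist x 0)) 0) in
           in_H_omega \<omega> fe \<and> integrable M fe \<and>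
           sup_norm fe = H_omega_norm \<omega> fe / measure M (ball 0 h) * (LINT u:ball 0 h|M. \<omega> (dist u 0))
                         + L1_norm M fe / measure M (ball 0 h))"
proof -
  interpret standing_space M by (rule standing_space_if_standing_setting[OF assms(1)])
  note \<omega> = assms(2)
  obtain p :: 'a where p: "p \<in> ball 0 h" "p \<noteq> 0" using ball_has_nonzero_point[OF \<open>h > 0\<close>] .
  define fe :: "'a \<Rightarrow> real" where "fe = extremal_fun \<omega> h"
  have fe_eq: "(\<lambda>x. max (\<omega> h - \<omega> (dist x 0)) 0) = fe"
    by (simp add: fun_eq_iff fe_def extremal_fun_def)
  note bound = abs_le_H_omega_L1_bound[OF \<omega> \<open>h > 0\<close> assms(4,5)]
  have "in_H_omega \<omega> fe"
    unfolding fe_def by (rule in_H_omega_extremal_fun[OF \<omega>])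
  moreover have "H_omega_norm \<omega> fe = 1"
    unfolding fe_def by (rule H_omega_norm_extremal_fun[OF \<omega> p])
  moreover have "sup_norm fe = \<omega> h"
    unfolding fe_def using \<open>h > 0\<close> by (simp add: sup_norm_extremal_fun[OF \<omega>])
  moreover note integrable_extremal_fun[OF \<omega> \<open>h > 0\<close>, folded fe_def]
    L1_norm_extremal_fun[OF \<omega> \<open>h > 0\<close>, folded fe_def] measure_ball_pos[OF \<open>h > 0\<close>]
  moreover have "bdd_above (range (\<lambda>x. \<bar>f x\<bar>))" using bound by (intro bdd_aboveI2)
  moreover have "sup_norm f \<le> H_omega_norm \<omega> f / measure M (ball 0 h) * (LINT u:ball 0 h|M. \<omega> (dist u 0))
                      + L1_norm M f / measure M (ball 0 h)"
    using sup_norm_le[OF bound] by (simp add: add_divide_distrib)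
  ultimately show ?thesis
    unfolding Let_def fe_eq by (simp add: field_simps)
qed

end
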